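(* Let $\Lambda=A_{\rm tri}\mathbb{Z}^2$, and let $\mathcal R,V$ satisfy the assumptions in the context, including the line reflection symmetry $S\mathcal R=\mathcal R$ and $V(A)=V((-A_{S\rho})_{\rho\in\mathcal R})$ for all $A$. Let $W(F)=\frac1{\det A_{\rm tri}}V((F\cdot\rho)_{\rho\in\mathcal R})$ for $F\in\mathbb{R}^2$. Then $\nabla^3W(0)=c_{\rm quad}(E_{111}-3\,\mathrm{sym}E_{122})$ for some $c_{\rm quad}\in\mathbb{R}$, and therefore for twice differentiable $u,v$, $$\mathrm{div}\big(\nabla^3W(0)[\nabla u,\nabla v]\big)=c_{\rm quad}\left(\begin{pmatrix}\partial_{11}v-\partial_{22}v\\-2\partial_{12}v\end{pmatrix}\cdot\nabla u+\begin{pmatrix}\partial_{11}u-\partial_{22}u\\-2\partial_{12}u\end{pmatrix}\cdot\nabla v\right).$$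
   Context: $A_{\rm tri}=\begin{pmatrix}1&\frac12\\0&\frac{\sqrt3}{2}\end{pmatrix}$, $Q_\Lambda$ is the rotation through $2\pi/3$, and $S=\begin{pmatrix}\frac12&\frac{\sqrt3}{2}\\\frac{\sqrt3}{2}&-\frac12\end{pmatrix}$. $\mathcal R\subset\Lambda\setminus\{0\}$ is finite with $\mathrm{span}_\mathbb{Z}\mathcal R=\Lambda$ and $Q_\Lambda\mathcal R=\mathcal R$. $V\in C^6(\mathbb{R}^{\mathcal R},\mathbb{R})$ satisfies $V(A)=V((A_{Q_\Lambda\rho})_\rho)$, is periodic with minimal period $p>0$ in each component, and is lattice stable (there is $c_0>0$ with $\sum_x\sum_{\rho,\sigma}\nabla^2V(0)_{\rho\sigma}D_\rho u(x)D_\sigma u(x)\ge c_0\sum_x|(D_\rho u(x))_\rho|^2$ for all $u$ with finite right-hand side, $D_\rho u(x)=u(x+\rho)-u(x)$). $E_{ijk}=e_i\otimes e_j\otimes e_k$, $(\mathrm{sym}A)_{l_1l_2l_3}=\frac16\sum_{\varphi\in S_3}A_{l_{\varphi(1)}l_{\varphi(2)}l_{\varphi(3)}}$. For a 3-tensor $T$, $T[\nabla u,\nabla v]$ is the vector with components $\sum_{j,k}T_{ijk}\partial_ju\,\partial_kv$. *)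

theory Defs
  imports "HOL-Analysis.Analysis"
begin

definition pd :: "'n::finite \<Rightarrow> (real^'n \<Rightarrow> real) \<Rightarrow> real^'n \<Rightarrow> real" where
  "pd i f x = deriv (\<lambda>t. f (x + t *\<^sub>R axis i 1)) 0"

fun Ck :: "nat \<Rightarrow> (real^'n::finite \<Rightarrow> real) \<Rightarrow> bool" where
  "Ck 0 f = continuous_on UNIV f"
| "Ck (Suc k) f = (continuous_on UNIV f \<and>
      (\<forall>i x. (\<lambda>t. f (x + t *\<^sub>R axis i 1)) differentiable (at 0)) \<and>
      (\<forall>i. Ck k (pd i f)))"

definition twice_diff :: "(real^'n::finite \<Rightarrow> real) \<Rightarrow> bool" where
  "twice_diff u = ((\<forall>x. u differentiable (at x)) \<and> (\<forall>i x. pd i u differentiable (at x)))"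

definition grad :: "(real^'n::finite \<Rightarrow> real) \<Rightarrow> real^'n \<Rightarrow> real^'n" where
  "grad u x = (\<chi> i. pd i u x)"

definition divg :: "(real^'n::finite \<Rightarrow> real^'n) \<Rightarrow> real^'n \<Rightarrow> real" where
  "divg G x = (\<Sum>i\<in>UNIV. pd i (\<lambda>y. G y $ i) x)"

definition A_tri :: "real^2^2" where
  "A_tri = vector [vector [1, 1/2], vector [0, sqrt 3 / 2]]"

definition Q_rot :: "real^2^2" where
  "Q_rot = vector [vector [cos (2*pi/3), - sin (2*pi/3)], vector [sin (2*pi/3), cos (2*pi/3)]]"

definition S_refl :: "real^2^2" where
  "S_refl = vector [vector [1/2, sqrt 3 / 2], vector [sqrt 3 / 2, - 1/2]]"

definition Lambda_tri :: "(real^2) set" where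
  "Lambda_tri = {A_tri *v vector [of_int a, of_int b] | a b :: int. True}"

definition zspan :: "(real^2) set \<Rightarrow> (real^2) set" where
  "zspan R = {x. \<exists>c :: real^2 \<Rightarrow> int. x = (\<Sum>\<rho>\<in>R. of_int (c \<rho>) *\<^sub>R \<rho>)}"

text \<open>Reindexing (A_\<rho>)_\<rho> \<mapsto> (A_{M\<rho>})_\<rho>, where rho enumerates R.\<close>
definition reindex :: "('r \<Rightarrow> real^2) \<Rightarrow> real^2^2 \<Rightarrow> real^'r \<Rightarrow> real^'r" where
  "reindex rho M A = (\<chi> r. A $ (inv rho (M *v rho r)))"

definition Ddiff :: "('r \<Rightarrow> real^2) \<Rightarrow> 'r \<Rightarrow> (real^2 \<Rightarrow> real) \<Rightarrow> real^2 \<Rightarrow> real" where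
  "Ddiff rho r u x = u (x + rho r) - u x"

definition E3 :: "2 \<Rightarrow> 2 \<Rightarrow> 2 \<Rightarrow> (2 \<Rightarrow> 2 \<Rightarrow> 2 \<Rightarrow> real)" where
  "E3 i j k = (\<lambda>a b c. if a = i \<and> b = j \<and> c = k then 1 else 0)"

definition sym3 :: "(2 \<Rightarrow> 2 \<Rightarrow> 2 \<Rightarrow> real) \<Rightarrow> (2 \<Rightarrow> 2 \<Rightarrow> 2 \<Rightarrow> real)" where
  "sym3 A = (\<lambda>l1 l2 l3. (1/6) * (A l1 l2 l3 + A l1 l3 l2 + A l2 l1 l3
                               + A l2 l3 l1 + A l3 l1 l2 + A l3 l2 l1))"

end

theory Submission
  imports Defs
begin

(* Up to the factor 1 / det A_tri, the third derivative of W at 0 is the moment tensor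
   T = sum over bonds r, s, t of rho_r (x) rho_s (x) rho_t times d^3 V / dA_r dA_s dA_t (0).
   A matrix M mapping the bond set onto itself permutes the bonds, so if V is invariant
   under the induced reindexing up to the sign eps, then T = eps^3 (M (x) M (x) M) T.
   The rotation Q gives invariance; composed with S it gives the reflection x1 -> -x1
   with eps = -1, which kills every entry with an even number of indices equal to 1.
   Q-invariance of the remaining entries T111, T122, T212, T221 is a linear system whose
   solutions are T122 = T212 = T221 = -T111.  The divergence formula is then a direct
   computation, using the symmetry of the second derivatives of u and v. *)

lemma Ck_Suc_imp_Ck: "Ck (Suc k) f \<Longrightarrow> Ck k f"
  by (induction k arbitrary: f) auto

lemma Ck_le: "Ck n f \<Longrightarrow> k \<le> n \<Longrightarrow> Ck k f"
  by (induction n) (auto simp del: Ck.simps simp: le_Suc_eq dest: Ck_Suc_imp_Ck)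

lemma has_real_derivative_pd:
  assumes "Ck 1 g"
  shows "((\<lambda>t. g (x + t *\<^sub>R axis i 1)) has_real_derivative pd i g (x + s *\<^sub>R axis i 1)) (at s)"
proof -
  have "((\<lambda>t. g ((x + s *\<^sub>R axis i 1) + t *\<^sub>R axis i 1)) has_real_derivative pd i g (x + s *\<^sub>R axis i 1)) (at 0)"
    using assms unfolding pd_def by (simp add: DERIV_deriv_iff_real_differentiable)
  then have "((\<lambda>t. g (x + (t + s) *\<^sub>R axis i 1)) has_real_derivative pd i g (x + s *\<^sub>R axis i 1)) (at 0)"
    by (simp add: algebra_simps)
  then show ?thesis
    using DERIV_shift[of "\<lambda>t. g (x + t *\<^sub>R axis i 1)" _ 0 s] by simp
qed

lemma MVT_any_order:
  fixes f :: "real \<Rightarrow> real"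
  assumes "\<And>s. (f has_real_derivative f' s) (at s)"
  shows "\<exists>\<xi>. \<bar>\<xi> - a\<bar> \<le> \<bar>b - a\<bar> \<and> f b - f a = (b - a) * f' \<xi>"
proof (cases a b rule: linorder_cases)
  case less
  then obtain \<xi> where "a < \<xi>" "\<xi> < b" "f b - f a = (b - a) * f' \<xi>"
    using MVT2[of a b f f'] assms by blast
  then show ?thesis by (intro exI[of _ \<xi>]) auto
next
  case greater
  then obtain \<xi> where "b < \<xi>" "\<xi> < a" "f a - f b = (a - b) * f' \<xi>"
    using MVT2[of b a f f'] assms by blast
  then show ?thesis by (intro exI[of _ \<xi>]) (auto simp: algebra_simps)
qed auto

lemma pd_MVT:
  assumes "Ck 1 g"
  shows "\<exists>\<xi>. \<bar>\<xi>\<bar> \<le> \<bar>c\<bar> \<and> g (y + c *\<^sub>R axis a 1) - g y = c * pd a g (y + \<xi> *\<^sub>R axis a 1)"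
  using MVT_any_order[OF has_real_derivative_pd[OF assms, of y a], of 0 c] by auto

lemma has_real_derivative_line_add_axis:
  fixes g :: "real^'n::finite \<Rightarrow> real"
  assumes "Ck 1 g"
  shows "((\<lambda>t. g (x + t *\<^sub>R (w + c *\<^sub>R axis a 1)) - g (x + t *\<^sub>R w)) has_real_derivative c * pd a g x) (at 0)"
proof -
  define F where "F t = g (x + t *\<^sub>R (w + c *\<^sub>R axis a 1)) - g (x + t *\<^sub>R w)" for t
  have "\<exists>\<xi>. \<bar>\<xi>\<bar> \<le> \<bar>t * c\<bar> \<and> F t = t * c * pd a g (x + t *\<^sub>R w + \<xi> *\<^sub>R axis a 1)" for t
    using pd_MVT[OF assms, of "t * c" "x + t *\<^sub>R w" a] by (simp add: F_def algebra_simps)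
  then obtain \<xi> where \<xi>_bound: "\<And>t. \<bar>\<xi> t\<bar> \<le> \<bar>t * c\<bar>"
    and F_eq: "\<And>t. F t = t * c * pd a g (x + t *\<^sub>R w + \<xi> t *\<^sub>R axis a 1)"
    by metis
  define z where "z t = x + t *\<^sub>R w + \<xi> t *\<^sub>R axis a 1" for t
  have "((\<lambda>t. z t - x) \<longlongrightarrow> 0) (at 0)"
  proof (rule Lim_null_comparison)
    show "\<forall>\<^sub>F t in at 0. norm (z t - x) \<le> \<bar>t\<bar> * (norm w + \<bar>c\<bar>)"
    proof (intro always_eventually allI)
      fix t
      have "norm (z t - x) \<le> \<bar>t\<bar> * norm w + \<bar>\<xi> t\<bar>"
        using norm_triangle_ineq[of "t *\<^sub>R w" "\<xi> t *\<^sub>R axis a 1"] by (simp add: z_def)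
      then show "norm (z t - x) \<le> \<bar>t\<bar> * (norm w + \<bar>c\<bar>)"
        using \<xi>_bound[of t] by (simp add: abs_mult distrib_left)
    qed
    show "((\<lambda>t. \<bar>t\<bar> * (norm w + \<bar>c\<bar>)) \<longlongrightarrow> 0) (at 0)"
      by (intro tendsto_eq_intros) auto
  qed
  then have "(z \<longlongrightarrow> x) (at 0)"
    by (rule LIM_zero_cancel)
  moreover have "isCont (pd a g) x"
    using assms by (simp add: continuous_on_eq_continuous_at)
  ultimately have "((\<lambda>t. pd a g (z t)) \<longlongrightarrow> pd a g x) (at 0)"
    by (rule isCont_tendsto_compose[rotated])
  then have "((\<lambda>t. c * pd a g (z t)) \<longlongrightarrow> c * pd a g x) (at 0)"
    by (rule tendsto_mult_left)
  moreover have "\<forall>\<^sub>F t in at 0. c * pd a g (z t) = F t / t"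
    by (simp add: eventually_at_filter F_eq z_def)
  ultimately have "((\<lambda>t. F t / t) \<longlongrightarrow> c * pd a g x) (at 0)"
    by (rule Lim_transform_eventually)
  moreover have "F 0 = 0"
    by (simp add: F_def)
  ultimately show ?thesis
    unfolding has_field_derivative_iff F_def[symmetric] by simp
qed

lemma has_real_derivative_line_supported:
  fixes g :: "real^'n::finite \<Rightarrow> real"
  assumes "Ck 1 g" and "finite S" and "\<And>r. r \<notin> S \<Longrightarrow> w $ r = 0"
  shows "((\<lambda>t. g (x + t *\<^sub>R w)) has_real_derivative (\<Sum>r\<in>S. w $ r * pd r g x)) (at 0)"
  using assms(2,3)
proof (induction S arbitrary: w rule: finite_induct)
  case empty
  then have "w = 0" by (simp add: vec_eq_iff)
  then show ?case by simp
next
  case (insert a S)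
  define w' where "w' = w - (w $ a) *\<^sub>R axis a 1"
  have "((\<lambda>t. g (x + t *\<^sub>R w')) has_real_derivative (\<Sum>r\<in>S. w' $ r * pd r g x)) (at 0)"
    using insert by (intro insert.IH) (auto simp: w'_def axis_def)
  from DERIV_add[OF has_real_derivative_line_add_axis[OF assms(1), of x w' "w $ a" a] this]
  have "((\<lambda>t. g (x + t *\<^sub>R w)) has_real_derivative w $ a * pd a g x + (\<Sum>r\<in>S. w' $ r * pd r g x)) (at 0)"
    by (simp add: w'_def)
  moreover have "(\<Sum>r\<in>S. w' $ r * pd r g x) = (\<Sum>r\<in>S. w $ r * pd r g x)"
    using insert.hyps by (intro sum.cong) (auto simp: w'_def axis_def)
  ultimately show ?case
    using insert.hyps by simp
qed

lemma has_real_derivative_line: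
  fixes g :: "real^'n::finite \<Rightarrow> real"
  assumes "Ck 1 g"
  shows "((\<lambda>t. g (x + t *\<^sub>R w)) has_real_derivative (\<Sum>r\<in>UNIV. w $ r * pd r g x)) (at 0)"
  using has_real_derivative_line_supported[OF assms, of UNIV] by simp

lemma has_real_derivative_comp_linear:
  fixes g :: "real^'n::finite \<Rightarrow> real" and L :: "real^'m::finite \<Rightarrow> real^'n"
  assumes "Ck 1 g" and "linear L"
  shows "((\<lambda>h. g (L (F + h *\<^sub>R axis k 1))) has_real_derivative
           (\<Sum>r\<in>UNIV. L (axis k 1) $ r * pd r g (L F))) (at 0)"
  using has_real_derivative_line[OF assms(1), of "L F" "L (axis k 1)"] assms(2)
  by (simp add: linear_add linear_scale)

lemma pd3_comp_linear:
  fixes g :: "real^'n::finite \<Rightarrow> real" and L :: "real^'m::finite \<Rightarrow> real^'n"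
  assumes "Ck 3 g" and "linear L"
  shows "pd i (pd j (pd k (\<lambda>F. c * g (L F)))) F =
    c * (\<Sum>t\<in>UNIV. \<Sum>s\<in>UNIV. \<Sum>r\<in>UNIV. L (axis i 1) $ r * L (axis j 1) $ s * L (axis k 1) $ t * pd r (pd s (pd t g)) (L F))"
proof -
  have C1: "Ck 1 g" "Ck 1 (pd t g)" "Ck 1 (pd s (pd t g))" for s t
    using assms(1) Ck_le[OF assms(1)] by (simp_all add: numeral_eq_Suc)
  have d1: "pd k (\<lambda>F. c * g (L F)) = (\<lambda>F. c * (\<Sum>t\<in>UNIV. L (axis k 1) $ t * pd t g (L F)))"
    by (rule ext, unfold pd_def[of k])
      (intro DERIV_imp_deriv DERIV_cmult has_real_derivative_comp_linear C1 assms(2))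
  have d2: "pd j (pd k (\<lambda>F. c * g (L F))) = (\<lambda>F. c * (\<Sum>t\<in>UNIV. L (axis k 1) $ t *
      (\<Sum>s\<in>UNIV. L (axis j 1) $ s * pd s (pd t g) (L F))))"
    by (rule ext, unfold d1 pd_def[of j])
      (intro DERIV_imp_deriv DERIV_cmult DERIV_sum has_real_derivative_comp_linear C1 assms(2))
  have "((\<lambda>h. c * (\<Sum>t\<in>UNIV. L (axis k 1) $ t * (\<Sum>s\<in>UNIV. L (axis j 1) $ s * pd s (pd t g) (L (F + h *\<^sub>R axis i 1)))))
      has_real_derivative c * (\<Sum>t\<in>UNIV. L (axis k 1) $ t * (\<Sum>s\<in>UNIV. L (axis j 1) $ s *
         (\<Sum>r\<in>UNIV. L (axis i 1) $ r * pd r (pd s (pd t g)) (L F))))) (at 0)"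
    by (intro DERIV_cmult DERIV_sum has_real_derivative_comp_linear C1 assms(2))
  then show ?thesis
    unfolding d2 pd_def[of i]
    by (simp add: DERIV_imp_deriv sum_distrib_left mult_ac)
qed

lemma has_derivative_imp_line_derivative:
  fixes f :: "real^'n::finite \<Rightarrow> real"
  assumes "(f has_derivative D) (at (x + t *\<^sub>R e))"
  shows "((\<lambda>s. f (x + s *\<^sub>R e)) has_real_derivative D e) (at t)"
proof -
  have "((\<lambda>s. x + s *\<^sub>R e) has_derivative (\<lambda>s. s *\<^sub>R e)) (at t)"
    by (auto intro!: derivative_eq_intros)
  from has_derivative_compose[OF this assms]
  have "((\<lambda>s. f (x + s *\<^sub>R e)) has_derivative (\<lambda>s. D (s *\<^sub>R e))) (at t)"
    by (simp add: o_def)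
  moreover have "(\<lambda>s. D (s *\<^sub>R e)) = (*) (D e)"
    using has_derivative_bounded_linear[OF assms]
    by (simp add: fun_eq_iff linear_simps bounded_linear.linear mult.commute)
  ultimately show ?thesis
    by (simp add: has_field_derivative_def)
qed

lemma pd_eq_has_derivative:
  fixes f :: "real^'n::finite \<Rightarrow> real"
  assumes "(f has_derivative D) (at x)"
  shows "pd i f x = D (axis i 1)"
  unfolding pd_def using has_derivative_imp_line_derivative[of f D x 0 "axis i 1"] assms
  by (simp add: DERIV_imp_deriv)

lemma has_real_derivative_pd_differentiable:
  fixes f :: "real^'n::finite \<Rightarrow> real"
  assumes "f differentiable (at (x + t *\<^sub>R axis i 1))"
  shows "((\<lambda>s. f (x + s *\<^sub>R axis i 1)) has_real_derivative pd i f (x + t *\<^sub>R axis i 1)) (at t)"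
proof -
  obtain D where "(f has_derivative D) (at (x + t *\<^sub>R axis i 1))"
    using assms differentiable_def by blast
  then show ?thesis
    using has_derivative_imp_line_derivative pd_eq_has_derivative by metis
qed

definition second_difference :: "(real^'n::finite \<Rightarrow> real) \<Rightarrow> 'n \<Rightarrow> 'n \<Rightarrow> real^'n \<Rightarrow> real \<Rightarrow> real" where
  "second_difference f i j x h =
     f (x + h *\<^sub>R axis i 1 + h *\<^sub>R axis j 1) - f (x + h *\<^sub>R axis i 1) - f (x + h *\<^sub>R axis j 1) + f x"

lemma second_difference_commute: "second_difference f i j x h = second_difference f j i x h"
  by (simp add: second_difference_def algebra_simps)

lemma second_difference_MVT:
  fixes f :: "real^'n::finite \<Rightarrow> real"
  assumes "\<forall>y. f differentiable (at y)" and "0 < h"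
  shows "\<exists>\<xi>. 0 < \<xi> \<and> \<xi> < h \<and> second_difference f i j x h =
    h * (pd i f (x + h *\<^sub>R axis j 1 + \<xi> *\<^sub>R axis i 1) - pd i f (x + \<xi> *\<^sub>R axis i 1))"
proof -
  define \<phi> where "\<phi> t = f (x + h *\<^sub>R axis j 1 + t *\<^sub>R axis i 1) - f (x + t *\<^sub>R axis i 1)" for t
  have "(\<phi> has_real_derivative pd i f (x + h *\<^sub>R axis j 1 + t *\<^sub>R axis i 1) - pd i f (x + t *\<^sub>R axis i 1)) (at t)" for t
    unfolding \<phi>_def using assms(1) by (intro DERIV_diff has_real_derivative_pd_differentiable) auto
  from MVT2[OF assms(2) this] obtain \<xi> where "0 < \<xi>" "\<xi> < h"
    "\<phi> h - \<phi> 0 = (h - 0) * (pd i f (x + h *\<^sub>R axis j 1 + \<xi> *\<^sub>R axis i 1) - pd i f (x + \<xi> *\<^sub>R axis i 1))"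
    by blast
  moreover have "second_difference f i j x h = \<phi> h - \<phi> 0"
    by (simp add: \<phi>_def second_difference_def algebra_simps)
  ultimately show ?thesis by auto
qed

lemma second_difference_estimate:
  fixes f :: "real^'n::finite \<Rightarrow> real"
  assumes "\<forall>y. f differentiable (at y)" and Dg: "(pd i f has_derivative Dg) (at x)"
    and r: "\<And>y. norm (y - x) < d \<Longrightarrow> \<bar>pd i f y - pd i f x - Dg (y - x)\<bar> \<le> \<eta> * norm (y - x)"
    and "0 \<le> \<eta>" and "0 < h" and "2 * h < d"
  shows "\<bar>second_difference f i j x h - h\<^sup>2 * pd j (pd i f) x\<bar> \<le> 3 * \<eta> * h\<^sup>2"
proof -
  obtain \<xi> where \<xi>: "0 < \<xi>" "\<xi> < h" and \<Delta>: "second_difference f i j x h =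
      h * (pd i f (x + h *\<^sub>R axis j 1 + \<xi> *\<^sub>R axis i 1) - pd i f (x + \<xi> *\<^sub>R axis i 1))"
    using second_difference_MVT[OF assms(1) \<open>0 < h\<close>] by blast
  define y1 where "y1 = x + h *\<^sub>R axis j 1 + \<xi> *\<^sub>R axis i 1"
  define y2 where "y2 = x + \<xi> *\<^sub>R axis i 1"
  define \<rho> where "\<rho> y = pd i f y - pd i f x - Dg (y - x)" for y
  have "norm (y1 - x) \<le> 2 * h"
    using norm_triangle_ineq[of "h *\<^sub>R axis j 1" "\<xi> *\<^sub>R axis i 1 :: real^'n"] \<open>0 < h\<close> \<xi>
    by (simp add: y1_def)
  then have "\<bar>\<rho> y1\<bar> \<le> \<eta> * (2 * h)"
    using r[of y1] \<open>2 * h < d\<close> \<open>0 \<le> \<eta>\<close> unfolding \<rho>_def by (smt (verit) mult_left_mono)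
  moreover have "norm (y2 - x) \<le> h"
    using \<xi> by (simp add: y2_def)
  then have "\<bar>\<rho> y2\<bar> \<le> \<eta> * h"
    using r[of y2] \<open>0 < h\<close> \<open>2 * h < d\<close> \<open>0 \<le> \<eta>\<close> unfolding \<rho>_def by (smt (verit) mult_left_mono)
  ultimately have "\<bar>\<rho> y1 - \<rho> y2\<bar> \<le> 3 * \<eta> * h"
    using abs_triangle_ineq4[of "\<rho> y1" "\<rho> y2"] by linarith
  moreover have "Dg (y1 - x) = Dg (y2 - x) + h * pd j (pd i f) x"
    using has_derivative_bounded_linear[OF Dg] pd_eq_has_derivative[OF Dg, of j]
    by (simp add: y1_def y2_def bounded_linear.linear linear_add linear_scale)
  then have "second_difference f i j x h - h\<^sup>2 * pd j (pd i f) x = h * (\<rho> y1 - \<rho> y2)"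
    unfolding \<Delta> y1_def[symmetric] y2_def[symmetric] \<rho>_def
    by (simp add: power2_eq_square algebra_simps)
  ultimately show ?thesis
    using \<open>0 < h\<close> by (simp add: abs_mult mult_left_mono power2_eq_square mult_ac)
qed

lemma second_difference_tendsto:
  fixes f :: "real^'n::finite \<Rightarrow> real"
  assumes "\<forall>y. f differentiable (at y)" and "pd i f differentiable (at x)"
  shows "((\<lambda>h. second_difference f i j x h / h\<^sup>2) \<longlongrightarrow> pd j (pd i f) x) (at_right 0)"
proof (rule tendstoI)
  fix \<epsilon> :: real
  assume "0 < \<epsilon>"
  obtain Dg where Dg: "(pd i f has_derivative Dg) (at x)"
    using assms(2) differentiable_def by blast
  obtain d where "0 < d"
    and d: "\<And>y. norm (y - x) < d \<Longrightarrow> \<bar>pd i f y - pd i f x - Dg (y - x)\<bar> \<le> \<epsilon> / 4 * norm (y - x)"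
    using Dg[unfolded has_derivative_at_alt] \<open>0 < \<epsilon>\<close>
    by (metis real_norm_def zero_less_divide_iff zero_less_numeral)
  show "\<forall>\<^sub>F h in at_right 0. dist (second_difference f i j x h / h\<^sup>2) (pd j (pd i f) x) < \<epsilon>"
  proof (rule eventually_mono[OF eventually_at_right_real[of 0 "d / 2"]])
    show "0 < d / 2" using \<open>0 < d\<close> by simp
  next
    fix h assume "h \<in> {0<..<d / 2}"
    then have h: "0 < h" "2 * h < d" by auto
    have "\<bar>second_difference f i j x h - h\<^sup>2 * pd j (pd i f) x\<bar> \<le> 3 * (\<epsilon> / 4) * h\<^sup>2"
      using second_difference_estimate[OF assms(1) Dg d _ h] \<open>0 < \<epsilon>\<close> by simp
    also have "\<dots> < \<epsilon> * h\<^sup>2"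
      using h \<open>0 < \<epsilon>\<close> by simp
    finally have "\<bar>second_difference f i j x h - h\<^sup>2 * pd j (pd i f) x\<bar> < \<epsilon> * h\<^sup>2" .
    moreover have "second_difference f i j x h / h\<^sup>2 - pd j (pd i f) x
        = (second_difference f i j x h - h\<^sup>2 * pd j (pd i f) x) / h\<^sup>2"
      using h by (simp add: field_simps)
    ultimately show "dist (second_difference f i j x h / h\<^sup>2) (pd j (pd i f) x) < \<epsilon>"
      using h by (simp add: dist_real_def abs_divide pos_divide_less_eq)
  qed
qed

lemma pd_pd_commute:
  fixes f :: "real^'n::finite \<Rightarrow> real"
  assumes "twice_diff f"
  shows "pd j (pd i f) x = pd i (pd j f) x"
proof -
  have "\<forall>y. f differentiable (at y)" "\<And>i. pd i f differentiable (at x)"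
    using assms by (auto simp: twice_diff_def)
  from second_difference_tendsto[OF this(1) this(2)[of i], of j]
    second_difference_tendsto[OF this(1) this(2)[of j], of i]
  show ?thesis
    by (simp add: second_difference_commute[of f i j] tendsto_unique[OF trivial_limit_at_right_real])
qed

lemma pd_bilinear_form:
  fixes u v :: "real^'n::finite \<Rightarrow> real"
  assumes "twice_diff u" and "twice_diff v"
  shows "pd i (\<lambda>y. \<Sum>j\<in>UNIV. \<Sum>k\<in>UNIV. C j k * pd j u y * pd k v y) x =
     (\<Sum>j\<in>UNIV. \<Sum>k\<in>UNIV. C j k * (pd i (pd j u) x * pd k v x + pd j u x * pd i (pd k v) x))"
proof -
  have du: "((\<lambda>h. pd j w (x + h *\<^sub>R axis i 1)) has_real_derivative pd i (pd j w) x) (at 0)"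
    if "twice_diff w" for w j
    using has_real_derivative_pd_differentiable[of "pd j w" x 0 i] that by (simp add: twice_diff_def)
  have "((\<lambda>h. \<Sum>j\<in>UNIV. \<Sum>k\<in>UNIV. C j k * pd j u (x + h *\<^sub>R axis i 1) * pd k v (x + h *\<^sub>R axis i 1))
      has_real_derivative (\<Sum>j\<in>UNIV. \<Sum>k\<in>UNIV. C j k * (pd i (pd j u) x * pd k v x + pd j u x * pd i (pd k v) x))) (at 0)"
    using DERIV_cmult[OF DERIV_mult[OF du[OF assms(1)] du[OF assms(2)]]]
    by (intro DERIV_sum) (simp add: algebra_simps)
  then show ?thesis
    unfolding pd_def[of i] by (simp add: DERIV_imp_deriv)
qed

lemma reindex_permutation:
  fixes rho :: "'r::finite \<Rightarrow> real^2"
  assumes "inj rho" and "(\<lambda>x. M *v x) ` range rho = range rho"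
  shows "rho (inv rho (M *v rho r)) = M *v rho r"
    and "bij (\<lambda>r. inv rho (M *v rho r))"
proof -
  show "rho (inv rho (M *v rho r)) = M *v rho r" for r
    using assms(2) by (intro f_inv_into_f) blast
  have "surj (\<lambda>r. inv rho (M *v rho r))"
  proof (intro surjI)
    fix t
    obtain r where "rho t = M *v rho r" using assms(2) by (metis imageE rangeI)
    then show "inv rho (M *v rho (SOME r. rho t = M *v rho r)) = t"
      by (metis (mono_tags, lifting) assms(1) inv_f_f someI)
  qed
  then show "bij (\<lambda>r. inv rho (M *v rho r))"
    by (simp add: bij_def finite_UNIV_surj_inj)
qed

lemma reindex_add_axis:
  assumes "inj (\<lambda>r. inv rho (M *v rho r))"
  shows "reindex rho M (A + h *\<^sub>R axis (inv rho (M *v rho t)) 1) = reindex rho M A + h *\<^sub>R axis t 1"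
  using assms by (auto simp: reindex_def vec_eq_iff axis_def dest: injD)

lemma reindex_reindex:
  assumes "\<And>r. rho (inv rho (N *v rho r)) = N *v rho r"
  shows "reindex rho N (reindex rho M A) = reindex rho (M ** N) A"
  by (simp add: reindex_def assms matrix_vector_mul_assoc)

lemma pd_comp_axis_shift:
  assumes "Ck 1 g" and "\<And>A h. M (A + h *\<^sub>R axis s 1) = M A + (\<epsilon> * h) *\<^sub>R axis t 1"
  shows "pd s (\<lambda>A. a * g (M A)) A = a * \<epsilon> * pd t g (M A)"
proof -
  have "((\<lambda>h. g (M A + h *\<^sub>R axis t 1)) has_real_derivative pd t g (M A)) (at (\<epsilon> * 0))"
    using has_real_derivative_pd[OF assms(1), of "M A" t 0] by simp
  from DERIV_chain2[OF this DERIV_cmult_Id]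
  have "((\<lambda>h. a * g (M (A + h *\<^sub>R axis s 1))) has_real_derivative a * (pd t g (M A) * \<epsilon>)) (at 0)"
    unfolding assms(2) by (rule DERIV_cmult)
  then show ?thesis
    unfolding pd_def[of s] by (simp add: DERIV_imp_deriv)
qed

lemma pd3_comp_axis_permutation:
  assumes "Ck 3 V" and "\<And>A. V (M A) = V A"
    and "\<And>t A h. M (A + h *\<^sub>R axis (\<pi> t) 1) = M A + (\<epsilon> * h) *\<^sub>R axis t 1"
    and "M 0 = 0"
  shows "pd (\<pi> r) (pd (\<pi> s) (pd (\<pi> t) V)) 0 = \<epsilon> ^ 3 * pd r (pd s (pd t V)) 0"
proof -
  have C1: "Ck 1 V" "Ck 1 (pd t V)" "Ck 1 (pd s (pd t V))"
    using assms(1) Ck_le[OF assms(1)] by (simp_all add: numeral_eq_Suc)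
  have V_eq: "(\<lambda>A. 1 * V (M A)) = V"
    by (simp add: assms(2))
  have d1: "pd (\<pi> t) V = (\<lambda>A. \<epsilon> * pd t V (M A))"
    using pd_comp_axis_shift[OF C1(1) assms(3), where a=1, unfolded V_eq] by (simp add: fun_eq_iff)
  have d2: "pd (\<pi> s) (pd (\<pi> t) V) = (\<lambda>A. \<epsilon> * \<epsilon> * pd s (pd t V) (M A))"
    unfolding d1 using pd_comp_axis_shift[OF C1(2) assms(3)] by (simp add: fun_eq_iff)
  show ?thesis
    unfolding d2 using pd_comp_axis_shift[OF C1(3) assms(3)] assms(4)
    by (simp add: power3_eq_cube)
qed

definition tensor3_map :: "real^'n^'n \<Rightarrow> ('n \<Rightarrow> 'n \<Rightarrow> 'n \<Rightarrow> real) \<Rightarrow> ('n::finite \<Rightarrow> 'n \<Rightarrow> 'n \<Rightarrow> real)" where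
  "tensor3_map M T i j k = (\<Sum>a\<in>UNIV. \<Sum>b\<in>UNIV. \<Sum>c\<in>UNIV. M$i$a * M$j$b * M$k$c * T a b c)"

definition moment3 :: "('r::finite \<Rightarrow> real^'n) \<Rightarrow> ('r \<Rightarrow> 'r \<Rightarrow> 'r \<Rightarrow> real) \<Rightarrow> 'n \<Rightarrow> 'n \<Rightarrow> 'n \<Rightarrow> real" where
  "moment3 rho D i j k = (\<Sum>t\<in>UNIV. \<Sum>s\<in>UNIV. \<Sum>r\<in>UNIV. rho r $ i * rho s $ j * rho t $ k * D r s t)"

lemma moment3_permute:
  assumes "bij \<pi>"
  shows "moment3 (\<lambda>r. rho (\<pi> r)) (\<lambda>r s t. D (\<pi> r) (\<pi> s) (\<pi> t)) = moment3 rho D"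
proof -
  have reindex: "(\<Sum>r\<in>UNIV. g (\<pi> r)) = (\<Sum>r\<in>UNIV. g r)" for g :: "_ \<Rightarrow> real"
    using assms by (simp add: bij_betw_def sum.reindex_bij_betw)
  show ?thesis
  proof (intro ext)
    fix i j k
    have "moment3 (\<lambda>r. rho (\<pi> r)) (\<lambda>r s t. D (\<pi> r) (\<pi> s) (\<pi> t)) i j k
        = (\<Sum>t\<in>UNIV. \<Sum>s\<in>UNIV. \<Sum>r\<in>UNIV. rho r $ i * rho (\<pi> s) $ j * rho (\<pi> t) $ k * D r (\<pi> s) (\<pi> t))"
      unfolding moment3_def by (intro sum.cong refl) (rule reindex)
    also have "\<dots> = (\<Sum>t\<in>UNIV. \<Sum>s\<in>UNIV. \<Sum>r\<in>UNIV. rho r $ i * rho s $ j * rho (\<pi> t) $ k * D r s (\<pi> t))"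
      by (intro sum.cong refl) (rule reindex)
    also have "\<dots> = moment3 rho D i j k"
      unfolding moment3_def by (rule reindex)
    finally show "moment3 (\<lambda>r. rho (\<pi> r)) (\<lambda>r s t. D (\<pi> r) (\<pi> s) (\<pi> t)) i j k = moment3 rho D i j k" .
  qed
qed

lemma moment3_linear_map:
  fixes rho :: "'r::finite \<Rightarrow> real^2"
  shows "moment3 (\<lambda>r. M *v rho r) (\<lambda>r s t. e * D r s t) i j k = e * tensor3_map M (moment3 rho D) i j k"
proof -
  have expand: "(M *v rho r) $ i * (M *v rho s) $ j * (M *v rho t) $ k * (e * D r s t)
      = (\<Sum>a\<in>UNIV. \<Sum>b\<in>UNIV. \<Sum>c\<in>UNIV. e * (M$i$a * M$j$b * M$k$c) * (rho r $ a * rho s $ b * rho t $ c * D r s t))" for r s t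
    by (simp add: matrix_vector_mult_def sum_2 algebra_simps)
  show ?thesis
    unfolding moment3_def tensor3_map_def expand
    by (simp add: sum_2 sum.distrib sum_distrib_left distrib_left mult_ac)
qed

lemma pd3_comp_bond_lengths:
  fixes rho :: "'r::finite \<Rightarrow> real^'n::finite" and V :: "real^'r \<Rightarrow> real"
  assumes "Ck 3 V"
  shows "pd i (pd j (pd k (\<lambda>F. c * V (\<chi> r. F \<bullet> rho r)))) 0
    = c * moment3 rho (\<lambda>r s t. pd r (pd s (pd t V)) 0) i j k"
proof -
  have lin: "linear (\<lambda>F::real^'n. \<chi> r. F \<bullet> rho r)"
    by (auto simp: linear_iff vec_eq_iff inner_add_left)
  have "(\<chi> r. (0::real^'n) \<bullet> rho r) = 0"
    by (simp add: vec_eq_iff)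
  then show ?thesis
    unfolding pd3_comp_linear[OF assms lin] by (simp add: moment3_def inner_axis' mult_ac)
qed

lemma reindex_scaleR: "reindex rho M (c *\<^sub>R A) = c *\<^sub>R reindex rho M A"
  by (simp add: reindex_def vec_eq_iff)

lemma symmetry_compose:
  fixes rho :: "'r::finite \<Rightarrow> real^2"
  assumes "inj rho" and M: "(\<lambda>x. M *v x) ` range rho = range rho"
    and N: "(\<lambda>x. N *v x) ` range rho = range rho"
    and V_M: "\<And>A. V (\<delta> *\<^sub>R reindex rho M A) = V A"
    and V_N: "\<And>A. V (\<epsilon> *\<^sub>R reindex rho N A) = V A"
  shows "(\<lambda>x. (M ** N) *v x) ` range rho = range rho"
    and "V ((\<delta> * \<epsilon>) *\<^sub>R reindex rho (M ** N) A) = V A"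
proof -
  have "(\<lambda>x. (M ** N) *v x) ` range rho = (\<lambda>x. M *v x) ` (\<lambda>x. N *v x) ` range rho"
    by (simp add: image_image matrix_vector_mul_assoc)
  then show "(\<lambda>x. (M ** N) *v x) ` range rho = range rho"
    using M N by simp
  have "reindex rho (M ** N) A = reindex rho N (reindex rho M A)"
    using reindex_reindex[OF reindex_permutation(1)[OF assms(1) N]] by simp
  then show "V ((\<delta> * \<epsilon>) *\<^sub>R reindex rho (M ** N) A) = V A"
    using V_M V_N[of "\<delta> *\<^sub>R reindex rho M A"] by (simp add: reindex_scaleR mult.commute)
qed

lemma moment3_pd3_invariant:
  fixes rho :: "'r::finite \<Rightarrow> real^2" and V :: "real^'r \<Rightarrow> real"
  assumes "Ck 3 V" and "inj rho" and "(\<lambda>x. M *v x) ` range rho = range rho"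
    and "\<And>A. V (\<epsilon> *\<^sub>R reindex rho M A) = V A"
  defines "D \<equiv> \<lambda>r s t. pd r (pd s (pd t V)) 0"
  shows "moment3 rho D i j k = \<epsilon> ^ 3 * tensor3_map M (moment3 rho D) i j k"
proof -
  define \<pi> where "\<pi> r = inv rho (M *v rho r)" for r
  have rho_\<pi>: "rho (\<pi> r) = M *v rho r" and "bij \<pi>" for r
    unfolding \<pi>_def using reindex_permutation[OF assms(2,3)] by auto
  have "D (\<pi> r) (\<pi> s) (\<pi> t) = \<epsilon> ^ 3 * D r s t" for r s t
    unfolding D_def \<pi>_def
  proof (rule pd3_comp_axis_permutation[OF assms(1), where M = "\<lambda>A. \<epsilon> *\<^sub>R reindex rho M A"])
    show "\<epsilon> *\<^sub>R reindex rho M (A + h *\<^sub>R axis (inv rho (M *v rho t)) 1) = \<epsilon> *\<^sub>R reindex rho M A + (\<epsilon> * h) *\<^sub>R axis t 1"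
      for t A h
      using reindex_add_axis[OF bij_is_inj[OF reindex_permutation(2)[OF assms(2,3)]], of A h t]
      by (simp add: scaleR_add_right)
  qed (simp add: assms(4), simp add: reindex_def vec_eq_iff)
  then have "moment3 rho D = moment3 (\<lambda>r. M *v rho r) (\<lambda>r s t. \<epsilon> ^ 3 * D r s t)"
    using moment3_permute[OF \<open>bij \<pi>\<close>, of rho D] by (simp add: rho_\<pi>)
  then show ?thesis
    by (simp add: moment3_linear_map)
qed

definition reflect_first :: "real^2^2" where
  "reflect_first = vector [vector [-1, 0], vector [0, 1]]"

lemma Q_rot_S_refl: "Q_rot ** S_refl = reflect_first"
  unfolding Q_rot_def S_refl_def reflect_first_def cos_120 sin_120
  by (simp add: matrix_matrix_mult_def vec_eq_iff forall_2 sum_2 field_simps)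

lemma sqrt3_sqrt3_mult: "sqrt 3 * (sqrt 3 * x) = (3::real) * x"
  by (simp add: mult.assoc[symmetric])

lemma tensor3_rot_reflect_invariant:
  fixes T :: "2 \<Rightarrow> 2 \<Rightarrow> 2 \<Rightarrow> real"
  assumes Q: "\<And>i j k. T i j k = tensor3_map Q_rot T i j k"
    and P: "\<And>i j k. T i j k = - tensor3_map reflect_first T i j k"
  shows "T i j k = T 1 1 1 * (E3 1 1 1 i j k - 3 * sym3 (E3 1 2 2) i j k)"
proof -
  have zero: "T 1 1 2 = 0" "T 1 2 1 = 0" "T 2 1 1 = 0" "T 2 2 2 = 0"
    using P[of 1 1 2] P[of 1 2 1] P[of 2 1 1] P[of 2 2 2]
    by (simp_all add: tensor3_map_def sum_2 reflect_first_def)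
  note Q_expand = Q[unfolded tensor3_map_def sum_2 Q_rot_def cos_120 sin_120 vector_2 zero]
  have "9 * T 1 1 1 = -3 * (T 1 2 2 + T 2 1 2 + T 2 2 1)"
    using Q_expand[of 1 1 1] by (simp add: field_simps sqrt3_sqrt3_mult)
  moreover have "9 * T 1 2 2 = -3 * T 1 1 1 + 3 * T 2 1 2 + 3 * T 2 2 1"
    using Q_expand[of 1 2 2] by (simp add: field_simps sqrt3_sqrt3_mult)
  moreover have "9 * T 2 1 2 = -3 * T 1 1 1 + 3 * T 1 2 2 + 3 * T 2 2 1"
    using Q_expand[of 2 1 2] by (simp add: field_simps sqrt3_sqrt3_mult)
  moreover have "9 * T 2 2 1 = -3 * T 1 1 1 + 3 * T 1 2 2 + 3 * T 2 1 2"
    using Q_expand[of 2 2 1] by (simp add: field_simps sqrt3_sqrt3_mult)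
  ultimately have "T 1 2 2 = - T 1 1 1" "T 2 1 2 = - T 1 1 1" "T 2 2 1 = - T 1 1 1"
    by linarith+
  with zero have "\<forall>i j k. T i j k = T 1 1 1 * (E3 1 1 1 i j k - 3 * sym3 (E3 1 2 2) i j k)"
    by (simp add: forall_2 E3_def sym3_def)
  then show ?thesis by blast
qed

lemma divg_cubic_tensor_form:
  fixes u v :: "real^2 \<Rightarrow> real" and T :: "2 \<Rightarrow> 2 \<Rightarrow> 2 \<Rightarrow> real"
  assumes "twice_diff u" and "twice_diff v"
    and T: "\<And>i j k. T i j k = q * (E3 1 1 1 i j k - 3 * sym3 (E3 1 2 2) i j k)"
  shows "divg (\<lambda>y. \<chi> i. \<Sum>j\<in>UNIV. \<Sum>k\<in>UNIV. T i j k * pd j u y * pd k v y) x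
    = q * ((vector [pd 1 (pd 1 v) x - pd 2 (pd 2 v) x, -2 * pd 1 (pd 2 v) x] :: real^2) \<bullet> grad u x
         + (vector [pd 1 (pd 1 u) x - pd 2 (pd 2 u) x, -2 * pd 1 (pd 2 u) x] :: real^2) \<bullet> grad v x)"
proof -
  have T_values: "T 1 1 1 = q" "T 1 1 2 = 0" "T 1 2 1 = 0" "T 2 1 1 = 0" "T 2 2 2 = 0"
    "T 1 2 2 = - q" "T 2 1 2 = - q" "T 2 2 1 = - q"
    by (simp_all add: T E3_def sym3_def)
  have "divg (\<lambda>y. \<chi> i. \<Sum>j\<in>UNIV. \<Sum>k\<in>UNIV. T i j k * pd j u y * pd k v y) x
      = (\<Sum>i\<in>UNIV. \<Sum>j\<in>UNIV. \<Sum>k\<in>UNIV. T i j k * (pd i (pd j u) x * pd k v x + pd j u x * pd i (pd k v) x))"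
    unfolding divg_def by (simp add: pd_bilinear_form[OF assms(1,2)])
  then show ?thesis
    using pd_pd_commute[OF assms(1), of 1 2 x] pd_pd_commute[OF assms(2), of 1 2 x]
    by (simp add: sum_2 T_values grad_def inner_vec_def algebra_simps)
qed

theorem corollary5p5:
  fixes R :: "(real^2) set" and rho :: "'r::finite \<Rightarrow> real^2"
    and V :: "real^'r \<Rightarrow> real" and p c0 :: real
  assumes R_enum: "inj rho" "R = range rho"
    and R_sub: "R \<subseteq> Lambda_tri - {0}"
    and R_span: "zspan R = Lambda_tri"
    and R_Q: "(\<lambda>x. Q_rot *v x) ` R = R"
    and R_S: "(\<lambda>x. S_refl *v x) ` R = R"
    and V_C6: "Ck 6 V"
    and V_Q: "\<And>A. V A = V (reindex rho Q_rot A)"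
    and V_S: "\<And>A. V A = V (- reindex rho S_refl A)"
    and p_pos: "p > 0"
    and V_per: "\<And>r A. V (A + p *\<^sub>R axis r 1) = V A"
    and V_minper: "\<And>r q. 0 < q \<Longrightarrow> q < p \<Longrightarrow> \<not> (\<forall>A. V (A + q *\<^sub>R axis r 1) = V A)"
    and c0_pos: "c0 > 0"
    and stable: "\<And>u. (\<lambda>x. \<Sum>r\<in>UNIV. (Ddiff rho r u x)\<^sup>2) summable_on Lambda_tri \<Longrightarrow>
        (\<Sum>\<^sub>\<infinity>x\<in>Lambda_tri. \<Sum>r\<in>UNIV. \<Sum>s\<in>UNIV.
            pd s (pd r V) 0 * Ddiff rho r u x * Ddiff rho s u x)
        \<ge> c0 * (\<Sum>\<^sub>\<infinity>x\<in>Lambda_tri. \<Sum>r\<in>UNIV. (Ddiff rho r u x)\<^sup>2)"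
  defines "W \<equiv> (\<lambda>F::real^2. (1 / det A_tri) * V (\<chi> r. F \<bullet> rho r))"
  defines "T \<equiv> (\<lambda>i j k. pd i (pd j (pd k W)) 0)"
  shows "\<exists>c_quad::real.
     (\<forall>i j k. T i j k = c_quad * (E3 1 1 1 i j k - 3 * sym3 (E3 1 2 2) i j k)) \<and>
     (\<forall>u v :: real^2 \<Rightarrow> real. twice_diff u \<longrightarrow> twice_diff v \<longrightarrow>
        (\<forall>x. divg (\<lambda>y. \<chi> i. \<Sum>j\<in>UNIV. \<Sum>k\<in>UNIV. T i j k * pd j u y * pd k v y) x
          = c_quad * ((vector [pd 1 (pd 1 v) x - pd 2 (pd 2 v) x, -2 * pd 1 (pd 2 v) x] :: real^2) \<bullet> grad u x
                    + (vector [pd 1 (pd 1 u) x - pd 2 (pd 2 u) x, -2 * pd 1 (pd 2 u) x] :: real^2) \<bullet> grad v x)))"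
proof -
  have V3: "Ck 3 V"
    using Ck_le[OF V_C6] by simp
  define D where "D r s t = pd r (pd s (pd t V)) 0" for r s t
  have T_moment: "T i j k = 1 / det A_tri * moment3 rho D i j k" for i j k
    unfolding T_def W_def D_def by (rule pd3_comp_bond_lengths[OF V3])
  have R_Q': "(\<lambda>x. Q_rot *v x) ` range rho = range rho" and V_Q': "V (1 *\<^sub>R reindex rho Q_rot A) = V A"
    and R_S': "(\<lambda>x. S_refl *v x) ` range rho = range rho" and V_S': "V ((-1) *\<^sub>R reindex rho S_refl A) = V A"
    for A using R_enum R_Q R_S V_Q V_S by simp_all
  have "moment3 rho D i j k = tensor3_map Q_rot (moment3 rho D) i j k" for i j k
    using moment3_pd3_invariant[OF V3 R_enum(1) R_Q' V_Q'] by (simp add: D_def[abs_def])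
  moreover have "moment3 rho D i j k = - tensor3_map reflect_first (moment3 rho D) i j k" for i j k
    using moment3_pd3_invariant[OF V3 R_enum(1) symmetry_compose[OF R_enum(1) R_Q' R_S' V_Q' V_S']]
    by (simp add: Q_rot_S_refl D_def[abs_def])
  ultimately have moment_form:
    "moment3 rho D i j k = moment3 rho D 1 1 1 * (E3 1 1 1 i j k - 3 * sym3 (E3 1 2 2) i j k)" for i j k
    by (rule tensor3_rot_reflect_invariant)
  have T_form: "T i j k = T 1 1 1 * (E3 1 1 1 i j k - 3 * sym3 (E3 1 2 2) i j k)" for i j k
    unfolding T_moment moment_form[of i j k] by simp
  show ?thesis
    using T_form divg_cubic_tensor_form[OF _ _ T_form] by blast
qed

end
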